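(* Let $M\ge1$. There exist two languages $L_1,L_2$ and an enumeration $x_{1:\infty}$ which, for each $K\in\{L_1,L_2\}$, is an $M$-bounded displacement enumeration with respect to $K$ and an enumeration of $K$ with $o(1)$-noise, such that any element-based generator that generates in the limit from the target $K$ (for either possible target $K\in\{L_1,L_2\}$) on this enumeration achieves element-based upper density at most $1/M$ (for some choice of the target).
   Context: The universe is $U=\mathbb{N}$ with its natural order; a language is an infinite subset of $U$ with canonical enumeration $\ell_1<\ell_2<\cdots$. For $A,B\subseteq\mathbb{N}$ with $B=\{b_1<b_2<\cdots\}$, $\mu_{\rm up}(A,B)=\limsup_n\frac1n|A\cap\{b_1,\dots,b_n\}|$. For $x\in U$, $\sigma(x,L)=j$ if $x=\ell_j$ and $0$ if $x\notin L$; $x_{1:\infty}$ is an $M$-bounded displacement enumeration with respect to $L$ if there is $n^\star$ with $\sigma(x_n,L)\le Mn$ for all $n\ge n^\star$. An enumeration of $L$ with $o(1)$-noise is a sequence of distinct elements listing every element of $L$ with $\frac1n|\{t\le n:x_t\notin L\}|\to0$. An element-based generator outputs, from $x_1,\dots,x_n$ and knowledge of $\{L_1,L_2\}$ (not $K$), an element $w_n\notin\{x_1,\dots,x_n,w_1,\dots,w_{n-1}\}$; it generates in the limit from $K$ if $w_n\in K$ for all large $n$; its element-based upper density is $\mu_{\rm up}(\{w_1,w_2,\dots\},K)$. *)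

theory Defs
  imports Complex_Main "HOL-Library.Extended_Real" "HOL-Library.Infinite_Set"
begin

text \<open>Sequences are 1-indexed: an enumeration is x :: nat => nat, and only x 1, x 2, ... matter.\<close>

definition language :: "nat set \<Rightarrow> bool" where
  "language L \<longleftrightarrow> infinite L"

text \<open>sigma(y,L): index j with y = l_j in the canonical (increasing) enumeration of L, 0 if y not in L.\<close>
definition sigma :: "nat \<Rightarrow> nat set \<Rightarrow> nat" where
  "sigma y L = (if y \<in> L then card {z \<in> L. z \<le> y} else 0)"

text \<open>mu_up(A,B) = limsup_n (1/n) |A inter {b_1,...,b_n}|; b_{i+1} = enumerate B i.\<close>
definition mu_up :: "nat set \<Rightarrow> nat set \<Rightarrow> ereal" where
  "mu_up A B = limsup (\<lambda>n. ereal (real (card (A \<inter> enumerate B ` {..<n})) / real n))"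

definition bounded_displacement :: "nat \<Rightarrow> (nat \<Rightarrow> nat) \<Rightarrow> nat set \<Rightarrow> bool" where
  "bounded_displacement M x L \<longleftrightarrow> (\<exists>n0. \<forall>n\<ge>n0. n \<ge> 1 \<longrightarrow> sigma (x n) L \<le> M * n)"

definition noisy_enumeration :: "(nat \<Rightarrow> nat) \<Rightarrow> nat set \<Rightarrow> bool" where
  "noisy_enumeration x L \<longleftrightarrow>
     inj_on x {1..} \<and> L \<subseteq> x ` {1..} \<and>
     (\<lambda>n. real (card {t \<in> {1..n}. x t \<notin> L}) / real n) \<longlonglongrightarrow> 0"

definition gen_output :: "(nat list \<Rightarrow> nat) \<Rightarrow> (nat \<Rightarrow> nat) \<Rightarrow> nat \<Rightarrow> nat" where
  "gen_output G x n = G (map x [1..<Suc n])"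

definition valid_generator :: "(nat list \<Rightarrow> nat) \<Rightarrow> (nat \<Rightarrow> nat) \<Rightarrow> bool" where
  "valid_generator G x \<longleftrightarrow>
     (\<forall>n\<ge>1. gen_output G x n \<notin> x ` {1..n} \<union> gen_output G x ` {1..<n})"

definition generates_in_limit :: "(nat list \<Rightarrow> nat) \<Rightarrow> (nat \<Rightarrow> nat) \<Rightarrow> nat set \<Rightarrow> bool" where
  "generates_in_limit G x K \<longleftrightarrow> (\<exists>N. \<forall>n\<ge>N. gen_output G x n \<in> K)"

definition element_upper_density :: "(nat list \<Rightarrow> nat) \<Rightarrow> (nat \<Rightarrow> nat) \<Rightarrow> nat set \<Rightarrow> ereal" where
  "element_upper_density G x K = mu_up (gen_output G x ` {1..}) K"

end

theory Submission
  imports Defs "HOL-Analysis.Extended_Real_Limits" "HOL-Real_Asymp.Real_Asymp"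
begin

(* Take L1 = \<nat> and L2 = M\<nat>, and enumerate \<nat> by placing the non-multiples of M at the square
   positions 1, 4, 9, ... and the multiples of M, in increasing order, at all other positions.
   Only O(sqrt n) of the first n positions carry non-multiples, so this is an o(1)-noisy
   enumeration of both languages, and x t < M t gives M-bounded displacement. A generator that
   generates in the limit from L2 eventually outputs only multiples of M, so its outputs have upper
   density at most 1/M in L1 = \<nat>. For M = 1 both
   languages are \<nat> and x t = t - 1 works. *)

lemma enumerate_UNIV_nat [simp]: "enumerate (UNIV :: nat set) n = n"
proof (induction n)
  case 0
  then show ?case by (simp add: enumerate_0)
next
  case (Suc n)
  have "enumerate (UNIV :: nat set) (Suc n) = (LEAST s. s \<in> UNIV \<and> enumerate UNIV n < s)"
    by (rule enumerate_Suc'') simp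
  also have "\<dots> = Suc n"
    using Suc by (intro Least_equality) auto
  finally show ?case .
qed

lemma sigma_le_Suc: "sigma y L \<le> Suc y"
proof -
  have "card {z \<in> L. z \<le> y} \<le> card {..y}"
    by (intro card_mono) auto
  then show ?thesis by (simp add: sigma_def)
qed

lemma bounded_displacement_if_less:
  assumes "\<forall>t\<ge>1. x t < M * t"
  shows "bounded_displacement M x L"
  unfolding bounded_displacement_def
  using assms sigma_le_Suc[of _ L] by (metis Suc_leI order_trans)

lemma mu_up_UNIV: "mu_up A UNIV = limsup (\<lambda>n. ereal (real (card (A \<inter> {..<n})) / real n))"
  by (simp add: mu_up_def)

lemma mu_up_UNIV_mono_finite_diff:
  assumes "finite (A - B)"
  shows "mu_up A UNIV \<le> mu_up B UNIV"
proof -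
  define c where "c = real (card (A - B))"
  have "card (A \<inter> {..<n}) \<le> card (B \<inter> {..<n} \<union> (A - B))" for n
    using assms by (intro card_mono) auto
  also have "\<dots> n \<le> card (B \<inter> {..<n}) + card (A - B)" for n
    by (rule card_Un_le)
  finally have "real (card (A \<inter> {..<n})) \<le> c + real (card (B \<inter> {..<n}))" for n
    unfolding c_def by (metis add.commute of_nat_add of_nat_mono)
  then have "real (card (A \<inter> {..<n})) / real n \<le> c / real n + real (card (B \<inter> {..<n})) / real n"
    for n
    by (simp add: add_divide_distrib[symmetric] divide_right_mono)
  then have "mu_up A UNIV \<le> limsup (\<lambda>n. ereal (c / real n) + ereal (real (card (B \<inter> {..<n})) / real n))"
    unfolding mu_up_UNIV by (intro Limsup_mono always_eventually) simp
  also have "\<dots> = 0 + mu_up B UNIV"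
    unfolding mu_up_UNIV
    by (rule ereal_limsup_lim_add) (use lim_const_over_n[of c] in \<open>auto simp: zero_ereal_def\<close>)
  finally show ?thesis by simp
qed

lemma mu_up_multiples_le:
  assumes "M > 0"
  shows "mu_up {y. M dvd y} UNIV \<le> ereal (1 / real M)"
proof -
  have "{y. M dvd y} \<inter> {..<n} \<subseteq> (\<lambda>k. M * k) ` {..n div M}" for n
  proof
    fix y assume "y \<in> {y. M dvd y} \<inter> {..<n}"
    then obtain k where k: "y = M * k" "M * k \<le> n" by auto
    then have "M * k div M \<le> n div M" by (intro div_le_mono)
    then show "y \<in> (\<lambda>k. M * k) ` {..n div M}" using k assms by simp
  qed
  then have "card ({y. M dvd y} \<inter> {..<n}) \<le> card ((\<lambda>k. M * k) ` {..n div M})" for n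
    by (intro card_mono) auto
  also have "\<dots> n \<le> n div M + 1" for n
    using card_image_le[of "{..n div M}" "\<lambda>k. M * k"] by simp
  finally have "real (card ({y. M dvd y} \<inter> {..<n})) \<le> real (n div M + 1)" for n
    by (rule of_nat_mono)
  also have "\<dots> n \<le> real n / real M + 1" for n
    by (simp add: of_nat_div_le_of_nat)
  finally have bound: "real (card ({y. M dvd y} \<inter> {..<n})) \<le> real n / real M + 1" for n .
  have "real (card ({y. M dvd y} \<inter> {..<n})) / real n \<le> 1 / real M + 1 / real n"
    if "n > 0" for n
  proof -
    have "real (card ({y. M dvd y} \<inter> {..<n})) / real n \<le> (real n / real M + 1) / real n"
      using bound by (rule divide_right_mono) simp
    also have "\<dots> = 1 / real M + 1 / real n"
      using that by (simp add: field_simps)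
    finally show ?thesis .
  qed
  then have "mu_up {y. M dvd y} UNIV \<le> limsup (\<lambda>n. ereal (1 / real M + 1 / real n))"
    unfolding mu_up_UNIV by (intro Limsup_mono eventually_mono[OF eventually_gt_at_top[of 0]]) simp
  also have "\<dots> = ereal (1 / real M)"
    by (intro lim_imp_Limsup trivial_limit_sequentially tendsto_ereal) real_asymp
  finally show ?thesis .
qed

lemma element_upper_density_UNIV_le:
  assumes "generates_in_limit G x L"
  shows "element_upper_density G x UNIV \<le> mu_up L UNIV"
proof -
  obtain N where N: "\<forall>n\<ge>N. gen_output G x n \<in> L"
    using assms unfolding generates_in_limit_def by blast
  have "gen_output G x ` {1..} - L \<subseteq> gen_output G x ` {..<N}"
  proof
    fix w assume "w \<in> gen_output G x ` {1..} - L"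
    then obtain n where n: "w = gen_output G x n" "w \<notin> L" by auto
    then have "n < N" using N not_le by blast
    then show "w \<in> gen_output G x ` {..<N}" using n by simp
  qed
  then show ?thesis
    unfolding element_upper_density_def
    by (intro mu_up_UNIV_mono_finite_diff) (auto intro: finite_subset)
qed

lemma bij_betw_mult_multiples:
  assumes "M > 0"
  shows "bij_betw (\<lambda>k. M * k) UNIV {y :: nat. M dvd y}"
  using assms by (auto simp: bij_betw_def inj_def)

(* For M \<ge> 2, j = q (M - 1) + r goes to the (r + 1)-st non-multiple of M in the block
   {q M ..< (q + 1) M}. *)
definition nonmultiple :: "nat \<Rightarrow> nat \<Rightarrow> nat" where
  "nonmultiple M j = M * (j div (M - 1)) + j mod (M - 1) + 1"

lemma Suc_mod_pred_less: "M \<ge> 2 \<Longrightarrow> j mod (M - 1) + 1 < (M :: nat)"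
  using mod_less_divisor[of "M - 1" j] by linarith

lemma nonmultiple_mod:
  assumes "M \<ge> 2"
  shows "nonmultiple M j mod M = j mod (M - 1) + 1"
  using Suc_mod_pred_less[OF assms, of j] by (simp add: nonmultiple_def)

lemma nonmultiple_div:
  assumes "M \<ge> 2"
  shows "nonmultiple M j div M = j div (M - 1)"
proof -
  have "nonmultiple M j = (j mod (M - 1) + 1) + M * (j div (M - 1))"
    by (simp add: nonmultiple_def)
  also have "\<dots> div M = j div (M - 1) + (j mod (M - 1) + 1) div M"
    by (rule div_mult_self2) (use assms in simp)
  finally show ?thesis using Suc_mod_pred_less[OF assms, of j] by simp
qed

lemma bij_betw_nonmultiple:
  assumes "M \<ge> 2"
  shows "bij_betw (nonmultiple M) UNIV {y. \<not> M dvd y}"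
proof (rule bij_betw_imageI)
  show "inj (nonmultiple M)"
  proof (rule injI)
    fix a b assume "nonmultiple M a = nonmultiple M b"
    then have "nonmultiple M a div M = nonmultiple M b div M"
      and "nonmultiple M a mod M = nonmultiple M b mod M" by simp_all
    then have "a div (M - 1) = b div (M - 1)" "a mod (M - 1) = b mod (M - 1)"
      by (simp_all add: nonmultiple_div[OF assms] nonmultiple_mod[OF assms])
    then show "a = b" by (metis div_mult_mod_eq)
  qed
  have "nonmultiple M ((y div M) * (M - 1) + (y mod M - 1)) = y" if "\<not> M dvd y" for y
  proof -
    have "0 < y mod M" "y mod M < M"
      using that assms by (auto simp: dvd_eq_mod_eq_0)
    then have "y mod M - 1 < M - 1" by linarith
    then have "((y div M) * (M - 1) + (y mod M - 1)) div (M - 1) = y div M"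
      and "((y div M) * (M - 1) + (y mod M - 1)) mod (M - 1) = y mod M - 1"
      by simp_all
    then have "nonmultiple M ((y div M) * (M - 1) + (y mod M - 1)) = M * (y div M) + (y mod M - 1) + 1"
      by (simp add: nonmultiple_def)
    then show ?thesis
      using \<open>0 < y mod M\<close> mult_div_mod_eq[of M y] by linarith
  qed
  then show "range (nonmultiple M) = {y. \<not> M dvd y}"
    using nonmultiple_mod[OF assms] by (auto simp: dvd_eq_mod_eq_0 image_iff) metis
qed

lemma nonmultiple_less:
  assumes "M \<ge> 2"
  shows "nonmultiple M j < M * Suc j"
proof -
  have "M * (j div (M - 1)) \<le> M * j" by simp
  then have "M * (j div (M - 1)) + (j mod (M - 1) + 1) < M * j + M"
    using Suc_mod_pred_less[OF assms, of j] by linarith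
  then show ?thesis by (simp add: nonmultiple_def)
qed

definition pos_squares :: "nat set" where
  "pos_squares = range (\<lambda>j. (Suc j)\<^sup>2)"

lemma inj_Suc_square: "inj (\<lambda>j::nat. (Suc j)\<^sup>2)"
  by (rule injI) (metis Suc_inject power_eq_iff_eq_base zero_le zero_less_numeral)

definition pos_nonsquares :: "nat set" where
  "pos_nonsquares = {1..} - pos_squares"

lemma infinite_pos_nonsquares: "infinite pos_nonsquares"
proof -
  have "(Suc m)\<^sup>2 + 1 \<notin> pos_squares" for m
  proof
    assume "(Suc m)\<^sup>2 + 1 \<in> pos_squares"
    then obtain j where j: "(Suc m)\<^sup>2 + 1 = (Suc j)\<^sup>2" by (auto simp: pos_squares_def)
    then have "(Suc m)\<^sup>2 < (Suc j)\<^sup>2" "(Suc j)\<^sup>2 < (Suc (Suc m))\<^sup>2"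
      by (simp_all add: power2_eq_square)
    then have "m < j" "j < Suc m"
      using power_less_imp_less_base by blast+
    then show False by simp
  qed
  then have "range (\<lambda>m. (Suc m)\<^sup>2 + 1) \<subseteq> pos_nonsquares" by (auto simp: pos_nonsquares_def)
  moreover have "inj (\<lambda>m. (Suc m)\<^sup>2 + 1)"
    using inj_Suc_square by (auto simp: inj_def)
  ultimately show ?thesis
    using range_inj_infinite infinite_super by blast
qed

lemma card_pos_squares_le_sqrt: "real (card (pos_squares \<inter> {..n})) \<le> sqrt (real n)"
proof -
  have "pos_squares \<inter> {..n} \<subseteq> (\<lambda>j. (Suc j)\<^sup>2) ` {..<nat \<lfloor>sqrt (real n)\<rfloor>}"
  proof
    fix t assume "t \<in> pos_squares \<inter> {..n}"
    then obtain j where j: "t = (Suc j)\<^sup>2" "(Suc j)\<^sup>2 \<le> n" by (auto simp: pos_squares_def)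
    then have "real (Suc j) \<le> sqrt (real n)"
      by (intro real_le_rsqrt) (metis of_nat_le_iff of_nat_power)
    then have "j < nat \<lfloor>sqrt (real n)\<rfloor>" by linarith
    then show "t \<in> (\<lambda>j. (Suc j)\<^sup>2) ` {..<nat \<lfloor>sqrt (real n)\<rfloor>}" using j by simp
  qed
  then have "card (pos_squares \<inter> {..n}) \<le> nat \<lfloor>sqrt (real n)\<rfloor>"
    by (metis card_image_le card_lessThan card_mono finite_imageI finite_lessThan order_trans)
  then have "real (card (pos_squares \<inter> {..n})) \<le> real (nat \<lfloor>sqrt (real n)\<rfloor>)"
    by (rule of_nat_mono)
  also have "\<dots> = of_int \<lfloor>sqrt (real n)\<rfloor>" by simp
  also have "\<dots> \<le> sqrt (real n)" by (rule of_int_floor_le)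
  finally show ?thesis .
qed

lemma Suc_le_enumerate:
  assumes "infinite S" "0 \<notin> S"
  shows "Suc k \<le> enumerate S k"
proof (induction k)
  case 0
  show ?case using enumerate_in_set[OF assms(1), of 0] assms(2) by (cases "enumerate S 0") auto
next
  case (Suc k)
  then show ?case using enumerate_step[OF assms(1), of k] by simp
qed

definition sparse_noise_enum :: "nat \<Rightarrow> nat \<Rightarrow> nat" where
  "sparse_noise_enum M t =
     (if t \<in> pos_squares then nonmultiple M (the_inv (\<lambda>j. (Suc j)\<^sup>2) t)
      else M * the_inv (enumerate pos_nonsquares) t)"

lemma sparse_noise_enum_square: "sparse_noise_enum M ((Suc j)\<^sup>2) = nonmultiple M j"
  by (simp add: sparse_noise_enum_def pos_squares_def the_inv_f_f[OF inj_Suc_square])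

lemma sparse_noise_enum_nonsquare: "sparse_noise_enum M (enumerate pos_nonsquares k) = M * k"
proof -
  have "enumerate pos_nonsquares k \<notin> pos_squares"
    using enumerate_in_set[OF infinite_pos_nonsquares] by (auto simp: pos_nonsquares_def)
  then show ?thesis
    by (simp add: sparse_noise_enum_def the_inv_f_f[OF inj_enumerate[OF infinite_pos_nonsquares]])
qed

lemma pos_square_or_nonsquare:
  assumes "t \<ge> 1"
  obtains j where "t = (Suc j)\<^sup>2" | k where "t = enumerate pos_nonsquares k"
  using assms range_enumerate[OF infinite_pos_nonsquares]
  unfolding pos_nonsquares_def pos_squares_def by blast

lemma bij_betw_sparse_noise_enum:
  assumes "M \<ge> 2"
  shows "bij_betw (sparse_noise_enum M) {1..} UNIV"
proof -
  have "bij_betw (\<lambda>j. (Suc j)\<^sup>2) UNIV pos_squares"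
    by (simp add: bij_betw_def inj_Suc_square pos_squares_def)
  then have "bij_betw (nonmultiple M \<circ> the_inv (\<lambda>j. (Suc j)\<^sup>2)) pos_squares {y. \<not> M dvd y}"
    by (rule bij_betw_trans[OF bij_betw_the_inv_into bij_betw_nonmultiple[OF assms]])
  moreover have "bij_betw (sparse_noise_enum M) pos_squares {y. \<not> M dvd y} \<longleftrightarrow>
      bij_betw (nonmultiple M \<circ> the_inv (\<lambda>j. (Suc j)\<^sup>2)) pos_squares {y. \<not> M dvd y}"
    by (rule bij_betw_cong) (simp add: sparse_noise_enum_def)
  moreover have "bij_betw (\<lambda>k. M * k) UNIV {y. M dvd y}"
    using assms by (intro bij_betw_mult_multiples) simp
  then have "bij_betw ((\<lambda>k. M * k) \<circ> the_inv (enumerate pos_nonsquares)) pos_nonsquares {y. M dvd y}"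
    by (rule bij_betw_trans[OF bij_betw_the_inv_into[OF bij_enumerate[OF infinite_pos_nonsquares]]])
  moreover have "bij_betw (sparse_noise_enum M) pos_nonsquares {y. M dvd y} \<longleftrightarrow>
      bij_betw ((\<lambda>k. M * k) \<circ> the_inv (enumerate pos_nonsquares)) pos_nonsquares {y. M dvd y}"
    by (rule bij_betw_cong) (simp add: sparse_noise_enum_def pos_nonsquares_def)
  ultimately have "bij_betw (sparse_noise_enum M)
      (pos_squares \<union> pos_nonsquares) ({y. \<not> M dvd y} \<union> {y. M dvd y})"
    by (intro bij_betw_combine) auto
  moreover have "pos_squares \<union> pos_nonsquares = {1..}"
    by (auto simp: pos_squares_def pos_nonsquares_def)
  ultimately show ?thesis by (simp add: Un_def)
qed

lemma sparse_noise_enum_less: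
  assumes "M \<ge> 2" "t \<ge> 1"
  shows "sparse_noise_enum M t < M * t"
  using assms(2)
proof (cases rule: pos_square_or_nonsquare)
  case (1 j)
  have "nonmultiple M j < M * Suc j" by (rule nonmultiple_less[OF assms(1)])
  also have "\<dots> \<le> M * (Suc j)\<^sup>2" by (simp add: power2_eq_square)
  finally show ?thesis using 1 by (simp add: sparse_noise_enum_square)
next
  case (2 k)
  have "Suc k \<le> t"
    using 2 Suc_le_enumerate[OF infinite_pos_nonsquares] by (simp add: pos_nonsquares_def)
  then show ?thesis
    using 2 assms(1) by (simp add: sparse_noise_enum_nonsquare)
qed

lemma sparse_noise_enum_noise_vanishes:
  assumes "M \<ge> 2"
  shows "(\<lambda>n. real (card {t \<in> {1..n}. \<not> M dvd sparse_noise_enum M t}) / real n) \<longlonglongrightarrow> 0"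
proof (rule tendsto_sandwich[OF _ _ tendsto_const])
  have "{t \<in> {1..n}. \<not> M dvd sparse_noise_enum M t} \<subseteq> pos_squares \<inter> {..n}" for n
  proof
    fix t assume "t \<in> {t \<in> {1..n}. \<not> M dvd sparse_noise_enum M t}"
    then have "t \<ge> 1" "t \<le> n" "\<not> M dvd sparse_noise_enum M t" by auto
    then show "t \<in> pos_squares \<inter> {..n}"
      by (cases rule: pos_square_or_nonsquare) (auto simp: sparse_noise_enum_nonsquare pos_squares_def)
  qed
  then have "real (card {t \<in> {1..n}. \<not> M dvd sparse_noise_enum M t}) \<le> sqrt (real n)" for n
    by (meson card_mono card_pos_squares_le_sqrt finite_Int finite_atMost of_nat_mono order_trans)
  then show "\<forall>\<^sub>F n in sequentially.
      real (card {t \<in> {1..n}. \<not> M dvd sparse_noise_enum M t}) / real n \<le> sqrt (real n) / real n"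
    by (intro always_eventually allI divide_right_mono) simp_all
  show "(\<lambda>n. sqrt (real n) / real n) \<longlonglongrightarrow> 0" by real_asymp
qed simp

lemma enumeration_with_sparse_nonmultiples:
  assumes "M > 0"
  obtains x where "bij_betw x {1..} UNIV" "\<forall>t\<ge>1. x t < M * t"
    and "(\<lambda>n. real (card {t \<in> {1..n}. \<not> M dvd x t}) / real n) \<longlonglongrightarrow> 0"
proof (cases "M = 1")
  case True
  have "bij_betw (\<lambda>t :: nat. t - 1) {1..} UNIV"
    by (rule bij_betw_byWitness[where f' = Suc]) auto
  with True show ?thesis
    by (intro that[of "\<lambda>t. t - 1"]) auto
next
  case False
  with assms have "M \<ge> 2" by simp
  then show ?thesis
    using bij_betw_sparse_noise_enum sparse_noise_enum_less sparse_noise_enum_noise_vanishes that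
    by blast
qed

theorem theorem7p12:
  fixes M :: nat
  assumes "M \<ge> 1"
  shows "\<exists>L1 L2 (x :: nat \<Rightarrow> nat).
           language L1 \<and> language L2 \<and>
           (\<forall>K\<in>{L1, L2}. bounded_displacement M x K \<and> noisy_enumeration x K) \<and>
           (\<forall>G. valid_generator G x \<and> generates_in_limit G x L1 \<and> generates_in_limit G x L2
                \<longrightarrow> (\<exists>K\<in>{L1, L2}. element_upper_density G x K \<le> ereal (1 / real M)))"
proof -
  have "M > 0" using assms by simp
  obtain x where bij: "bij_betw x {1..} UNIV" and less: "\<forall>t\<ge>1. x t < M * t"
    and noise: "(\<lambda>n. real (card {t \<in> {1..n}. \<not> M dvd x t}) / real n) \<longlonglongrightarrow> 0"
    using enumeration_with_sparse_nonmultiples[OF \<open>M > 0\<close>] by blast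
  have languages: "language UNIV" "language {y. M dvd y}"
    using bij_betw_finite[OF bij_betw_mult_multiples[OF \<open>M > 0\<close>]] by (simp_all add: language_def)
  have "noisy_enumeration x UNIV" "noisy_enumeration x {y. M dvd y}"
    using bij noise by (simp_all add: noisy_enumeration_def bij_betw_def)
  moreover have "element_upper_density G x UNIV \<le> ereal (1 / real M)"
    if "generates_in_limit G x {y. M dvd y}" for G
    using element_upper_density_UNIV_le[OF that] mu_up_multiples_le[OF \<open>M > 0\<close>] by (rule order_trans)
  ultimately show ?thesis
    using languages bounded_displacement_if_less[OF less]
    by (intro exI[of _ UNIV] exI[of _ "{y. M dvd y}"] exI[of _ x]) auto
qed

end
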